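(* Assume (RHS.1), (RHS.2), (BC.1), (BC.2), (OBS.1), and, if (RHS.2b) holds, that (M.1) holds for all parameters. Then for any choice of parameters $\mathfrak h=(h,\varepsilon,\theta)$ there exists a unique $u_{\mathfrak h}\in\mathbb V_h$ solving the discrete obstacle problem, and it satisfies $$\|u_{\mathfrak h}\|_{L^\infty(\Omega_h)}\le C\|f\|_{L^\infty(\Omega_h)}+\|\chi\|_{L^\infty(\Omega_h)}+\max_{z\in\mathcal N_h^b}|\tilde g_\varepsilon(z)|,$$ where $C>0$ is a constant.
   Context: Setting: $\Omega\subset\mathbb R^d$ ($d\ge1$) is a bounded domain with continuous boundary. For $r>0$, $\Omega^{(r)}=\{x\in\Omega:\operatorname{dist}(x,\partial\Omega)>r\}$. $\{\mathcal T_h\}_{h>0}$ is a family of meshes of closed simplices, $h=\max_T\operatorname{diam}T$, $\Omega_h$ the interior of the union of the simplices, with $\Omega^{(h)}\subset\Omega_h\subset\Omega$; $\mathcal N_h$ the set of vertices. $\mathbb V_h$: continuous piecewise linear functions on $\mathcal T_h$, hat basis $\{\hat\varphi_z\}$, Lagrange interpolant $\mathcal I_h$. Parameters $\mathfrak h=(h,\varepsilon,\theta)$, $\varepsilon\in[h,\operatorname{diam}\Omega]$, $0<\theta\le1$. $\mathcal N_h^I=\mathcal N_h\cap\Omega^{(2\varepsilon)}$, $\mathcal N_h^b=\mathcal N_h\setminus\mathcal N_h^I$. $\mathbb S_\theta$: finite symmetric subset of the unit sphere $\mathbb S$ such that each $v\in\mathbb S$ has $v_\theta\in\mathbb S_\theta$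 with $|v-v_\theta|\le\theta$. For $z\in\mathcal N_h^I$: $\mathcal N_{\mathfrak h}(z)=\{z\}\cup\{z+\varepsilon v_\theta:v_\theta\in\mathbb S_\theta\}$, $-\Delta^\diamond_{\infty,\mathfrak h}w(z)=\varepsilon^{-2}\big(2w(z)-\max_{x\in\mathcal N_{\mathfrak h}(z)}\mathcal I_hw(x)-\min_{x\in\mathcal N_{\mathfrak h}(z)}\mathcal I_hw(x)\big)$, $\widetilde{\mathcal N}_{\mathfrak h}(z)=\{z\}\cup\{z'\in\mathcal N_h:\exists v_\theta\in\mathbb S_\theta,\ \hat\varphi_{z'}(z+\varepsilon v_\theta)>0\}$. Assumptions: (RHS.1) $f\in C(\Omega)\cap L^\infty(\Omega)$. (RHS.2) either (RHS.2a) $\sup_\Omega f<0$ or $\inf_\Omega f>0$, or (RHS.2b) $f\equiv0$. (BC.1) $g\in C(\partial\Omega)$. (BC.2) for every $\varepsilon>0$ a function $\tilde g_\varepsilon\in C(\overline\Omega)$ is given such that, if $g\in C^{0,\alpha}(\partial\Omega)$ for some $\alpha\in[0,1]$, then $\tilde g_\varepsilon\in C^{0,\alpha}(\overline\Omega)$ and $\|g-\tilde g_\varepsilon\|_{L^\infty(\partial\Omega)}\le C\varepsilon^\alpha$. (OBS.1) $\chi\in C(\overline\Omega)$, $\chi<g$ on $\partial\Omega$. (M.1) for every nonempty $S\subset\mathcal N_h^I$ there are $z\in S$, $z'\in\mathcal N_h\setminus S$ with $z'\in\widetilde{\mathcal N}_{\mathfrak h}(z)$. Discrete obstacle problem: find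 $u_{\mathfrak h}\in\mathbb V_h$ with $\min\{-\Delta^\diamond_{\infty,\mathfrak h}u_{\mathfrak h}(z)-f(z),\,u_{\mathfrak h}(z)-\chi(z)\}=0$ for $z\in\mathcal N_h^I$ and $u_{\mathfrak h}(z)=\tilde g_\varepsilon(z)$ for $z\in\mathcal N_h^b$. *)

theory Defs
  imports "HOL-Analysis.Analysis"
begin

definition continuous_boundary :: "'a::euclidean_space set \<Rightarrow> bool" where
  "continuous_boundary \<Omega> \<longleftrightarrow>
     (\<forall>x\<in>frontier \<Omega>. \<exists>r>0. \<exists>e (\<gamma>::'a \<Rightarrow> real).
        norm e = 1 \<and> continuous_on UNIV \<gamma> \<and>
        (\<forall>y\<in>ball x r. y \<in> \<Omega> \<longleftrightarrow> y \<bullet> e < \<gamma> (y - (y \<bullet> e) *\<^sub>R e)))"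

definition inner_set :: "'a::euclidean_space set \<Rightarrow> real \<Rightarrow> 'a set" where
  "inner_set \<Omega> r = {x \<in> \<Omega>. infdist x (frontier \<Omega>) > r}"

text \<open>A (closed, nondegenerate) simplex is given by its vertex set.\<close>
definition simplex_vertices :: "'a::euclidean_space set \<Rightarrow> bool" where
  "simplex_vertices S \<longleftrightarrow> finite S \<and> \<not> affine_dependent S \<and> card S = DIM('a) + 1"

definition is_mesh :: "'a::euclidean_space set set \<Rightarrow> bool" where
  "is_mesh \<T> \<longleftrightarrow> finite \<T> \<and> \<T> \<noteq> {} \<and> (\<forall>S\<in>\<T>. simplex_vertices S) \<and>
     (\<forall>S1\<in>\<T>. \<forall>S2\<in>\<T>. convex hull S1 \<inter> convex hull S2 = convex hull (S1 \<inter> S2))"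

definition mesh_size :: "'a::euclidean_space set set \<Rightarrow> real" where
  "mesh_size \<T> = Max ((\<lambda>S. diameter (convex hull S)) ` \<T>)"

definition mesh_union :: "'a::euclidean_space set set \<Rightarrow> 'a set" where
  "mesh_union \<T> = (\<Union>S\<in>\<T>. convex hull S)"

definition mesh_domain :: "'a::euclidean_space set set \<Rightarrow> 'a set" where
  "mesh_domain \<T> = interior (mesh_union \<T>)"

definition nodes :: "'a::euclidean_space set set \<Rightarrow> 'a set" where
  "nodes \<T> = \<Union>\<T>"

definition P1 :: "'a::euclidean_space set set \<Rightarrow> ('a \<Rightarrow> real) set" where
  "P1 \<T> = {u. continuous_on (mesh_union \<T>) u \<and>
              (\<forall>S\<in>\<T>. \<exists>a b. \<forall>x\<in>convex hull S. u x = a \<bullet> x + b) \<and>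
              (\<forall>x. x \<notin> mesh_union \<T> \<longrightarrow> u x = 0)}"

definition interp :: "'a::euclidean_space set set \<Rightarrow> ('a \<Rightarrow> real) \<Rightarrow> 'a \<Rightarrow> real" where
  "interp \<T> w = (THE u. u \<in> P1 \<T> \<and> (\<forall>z\<in>nodes \<T>. u z = w z))"

definition hat :: "'a::euclidean_space set set \<Rightarrow> 'a \<Rightarrow> 'a \<Rightarrow> real" where
  "hat \<T> z = interp \<T> (\<lambda>z'. if z' = z then 1 else 0)"

definition stencil_dirs :: "'a::euclidean_space set \<Rightarrow> real \<Rightarrow> bool" where
  "stencil_dirs S\<theta> \<theta> \<longleftrightarrow> finite S\<theta> \<and> (\<forall>v\<in>S\<theta>. norm v = 1 \<and> - v \<in> S\<theta>) \<and>
     (\<forall>v. norm v = 1 \<longrightarrow> (\<exists>w\<in>S\<theta>. norm (v - w) \<le> \<theta>))"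

definition interior_nodes :: "'a::euclidean_space set \<Rightarrow> 'a set set \<Rightarrow> real \<Rightarrow> 'a set" where
  "interior_nodes \<Omega> \<T> \<epsilon> = nodes \<T> \<inter> inner_set \<Omega> (2 * \<epsilon>)"

definition boundary_nodes :: "'a::euclidean_space set \<Rightarrow> 'a set set \<Rightarrow> real \<Rightarrow> 'a set" where
  "boundary_nodes \<Omega> \<T> \<epsilon> = nodes \<T> - interior_nodes \<Omega> \<T> \<epsilon>"

definition stencil :: "real \<Rightarrow> 'a::euclidean_space set \<Rightarrow> 'a \<Rightarrow> 'a set" where
  "stencil \<epsilon> S\<theta> z = insert z ((\<lambda>v. z + \<epsilon> *\<^sub>R v) ` S\<theta>)"

definition disc_inf_lap ::
    "'a::euclidean_space set set \<Rightarrow> real \<Rightarrow> 'a set \<Rightarrow> ('a \<Rightarrow> real) \<Rightarrow> 'a \<Rightarrow> real" where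
  "disc_inf_lap \<T> \<epsilon> S\<theta> w z =
     (2 * w z - Max (interp \<T> w ` stencil \<epsilon> S\<theta> z) - Min (interp \<T> w ` stencil \<epsilon> S\<theta> z)) / \<epsilon>\<^sup>2"

definition ext_stencil :: "'a::euclidean_space set set \<Rightarrow> real \<Rightarrow> 'a set \<Rightarrow> 'a \<Rightarrow> 'a set" where
  "ext_stencil \<T> \<epsilon> S\<theta> z =
     insert z {z' \<in> nodes \<T>. \<exists>v\<in>S\<theta>. hat \<T> z' (z + \<epsilon> *\<^sub>R v) > 0}"

definition cond_M1 :: "'a::euclidean_space set \<Rightarrow> 'a set set \<Rightarrow> real \<Rightarrow> 'a set \<Rightarrow> bool" where
  "cond_M1 \<Omega> \<T> \<epsilon> S\<theta> \<longleftrightarrow>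
     (\<forall>S. S \<noteq> {} \<and> S \<subseteq> interior_nodes \<Omega> \<T> \<epsilon> \<longrightarrow>
        (\<exists>z\<in>S. \<exists>z'\<in>nodes \<T> - S. z' \<in> ext_stencil \<T> \<epsilon> S\<theta> z))"

text \<open>Discrete obstacle problem (gt = the boundary datum tilde g_epsilon).\<close>
definition disc_obstacle_sol ::
    "'a::euclidean_space set \<Rightarrow> 'a set set \<Rightarrow> real \<Rightarrow> 'a set \<Rightarrow> ('a \<Rightarrow> real) \<Rightarrow>
     ('a \<Rightarrow> real) \<Rightarrow> ('a \<Rightarrow> real) \<Rightarrow> ('a \<Rightarrow> real) \<Rightarrow> bool" where
  "disc_obstacle_sol \<Omega> \<T> \<epsilon> S\<theta> f obs gt u \<longleftrightarrow>
     u \<in> P1 \<T> \<and>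
     (\<forall>z\<in>interior_nodes \<Omega> \<T> \<epsilon>. min (disc_inf_lap \<T> \<epsilon> S\<theta> u z - f z) (u z - obs z) = 0) \<and>
     (\<forall>z\<in>boundary_nodes \<Omega> \<T> \<epsilon>. u z = gt z)"

definition holder_on :: "'a::metric_space set \<Rightarrow> real \<Rightarrow> ('a \<Rightarrow> real) \<Rightarrow> bool" where
  "holder_on S \<alpha> u \<longleftrightarrow> continuous_on S u \<and> bounded (u ` S) \<and>
     (\<exists>L. \<forall>x\<in>S. \<forall>y\<in>S. \<bar>u x - u y\<bar> \<le> L * dist x y powr \<alpha>)"

definition linf_norm :: "'a set \<Rightarrow> ('a \<Rightarrow> real) \<Rightarrow> real" where
  "linf_norm S u = (if S = {} then 0 else (SUP x\<in>S. \<bar>u x\<bar>))"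

definition max_abs :: "'a set \<Rightarrow> ('a \<Rightarrow> real) \<Rightarrow> real" where
  "max_abs S u = (if S = {} then 0 else Max ((\<lambda>x. \<bar>u x\<bar>) ` S))"

end

theory Submission
  imports Defs
begin

(* The scheme is monotone: the operator sees w only through its P1 interpolant at the stencil
   points, i.e. through convex combinations of nodal values, and it commutes with the maps
   w \<mapsto> c w + d for c \<ge> 0.  Monotonicity gives a comparison principle against strict
   supersolutions.  A concave paraboloid of curvature A has operator value at least A: by the
   parallelogram law its values at opposite stencil points z + eps v and z - eps v fall short of
   2 w(z) by exactly 2 A eps^2.  Such paraboloids are supersolutions, so Perron's method (the
   nodewise infimum of all supersolutions) yields a solution, and comparing a solution with a
   paraboloid of curvature slightly above sup f gives the bound with C = diam(Omega)^2 + 1.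
   For uniqueness, if f has a strict sign then (1 + delta) v - delta min v, resp.
   (1 - delta) v + delta max v, is a strict supersolution above v, and delta \<rightarrow> 0 gives
   u \<le> v.  If f = 0, let M = max (u - v) > 0 and let x maximise u on the contact set
   {u = v + M}.  Since u is discretely harmonic and v + M superharmonic at x, both interpolants
   are flat on the stencil of x, so every node whose hat function is positive at a stencil point
   again lies in the contact set and maximises u on it; this contradicts (M.1). *)

lemma le_if_le_plus_vanishing:
  fixes a b K :: real
  assumes "\<And>\<delta>. 0 < \<delta> \<Longrightarrow> \<delta> < 1 \<Longrightarrow> a \<le> b + \<delta> * K"
  shows "a \<le> b"
proof (rule tendsto_lowerbound)
  show "((\<lambda>\<delta>. b + \<delta> * K) \<longlongrightarrow> b) (at_right 0)"
    by (auto intro!: tendsto_eq_intros)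
  show "\<forall>\<^sub>F \<delta> in at_right 0. a \<le> b + \<delta> * K"
    unfolding eventually_at_right_field using assms by (intro exI[of _ 1]) simp
qed simp

lemma Max_image_mono:
  fixes f g :: "'b \<Rightarrow> real"
  assumes "finite A" and "A \<noteq> {}" and "\<forall>x\<in>A. f x \<le> g x"
  shows "Max (f ` A) \<le> Max (g ` A)"
proof -
  have "\<forall>x\<in>A. f x \<le> Max (g ` A)"
    using assms Max_ge[of "g ` A"] by (meson finite_imageI imageI order_trans)
  then show ?thesis using assms by (simp add: Max_le_iff)
qed

lemma Min_image_mono:
  fixes f g :: "'b \<Rightarrow> real"
  assumes "finite A" and "A \<noteq> {}" and "\<forall>x\<in>A. f x \<le> g x"
  shows "Min (f ` A) \<le> Min (g ` A)"
proof -
  have "\<forall>x\<in>A. Min (f ` A) \<le> g x"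
    using assms Min_le[of "f ` A"] by (meson finite_imageI imageI order_trans)
  then show ?thesis using assms by (simp add: Min_ge_iff)
qed

lemma abs_le_linf_norm:
  assumes "bounded (u ` S)" and "z \<in> S"
  shows "\<bar>u z\<bar> \<le> linf_norm S u"
proof -
  have "bdd_above ((\<lambda>x. \<bar>u x\<bar>) ` S)"
    using assms(1) unfolding bounded_real bdd_above_def by fastforce
  then show ?thesis using assms(2) cSUP_upper unfolding linf_norm_def by fastforce
qed

lemma linf_norm_nonneg:
  assumes "bounded (u ` S)"
  shows "0 \<le> linf_norm S u"
proof (cases "S = {}")
  case False
  then obtain z where "z \<in> S" by blast
  then show ?thesis using abs_le_linf_norm[OF assms] by (meson abs_ge_zero order_trans)
qed (simp add: linf_norm_def)

lemma linf_norm_le: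
  assumes "\<forall>x\<in>S. \<bar>u x\<bar> \<le> R" and "0 \<le> R"
  shows "linf_norm S u \<le> R"
  using assms by (simp add: linf_norm_def cSUP_least)

lemma abs_le_max_abs: "finite S \<Longrightarrow> z \<in> S \<Longrightarrow> \<bar>u z\<bar> \<le> max_abs S u"
  unfolding max_abs_def by auto

lemma max_abs_nonneg:
  assumes "finite S"
  shows "0 \<le> max_abs S u"
proof (cases "S = {}")
  case False
  then obtain z where "z \<in> S" by blast
  then show ?thesis using abs_le_max_abs[OF assms] by (meson abs_ge_zero order_trans)
qed (simp add: max_abs_def)

lemma weighted_le_weighted_bound:
  fixes l a :: "'b \<Rightarrow> real"
  assumes "\<forall>z\<in>N. 0 \<le> l z" and "\<forall>z\<in>N. 0 < l z \<longrightarrow> a z \<le> M" and "z \<in> N"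
  shows "l z * a z \<le> l z * M"
proof (cases "l z = 0")
  case False
  then have "0 < l z" using assms(1,3) by (simp add: less_le)
  then show ?thesis using assms(2,3) by (simp add: mult_left_mono)
qed simp

lemma convex_comb_le:
  fixes l a :: "'b \<Rightarrow> real"
  assumes "\<forall>z\<in>N. 0 \<le> l z" and "sum l N = 1" and "\<forall>z\<in>N. 0 < l z \<longrightarrow> a z \<le> M"
  shows "(\<Sum>z\<in>N. l z * a z) \<le> M"
proof -
  have "(\<Sum>z\<in>N. l z * a z) \<le> (\<Sum>z\<in>N. l z * M)"
    using weighted_le_weighted_bound[OF assms(1,3)] by (rule sum_mono)
  also have "\<dots> = M" using assms(2) by (simp flip: sum_distrib_right)
  finally show ?thesis .
qed

lemma convex_comb_eq_bound:
  fixes l a :: "'b \<Rightarrow> real"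
  assumes "\<forall>z\<in>N. 0 \<le> l z" and "sum l N = 1" and "\<forall>z\<in>N. 0 < l z \<longrightarrow> a z \<le> M"
    and "M \<le> (\<Sum>z\<in>N. l z * a z)" and "z \<in> N" and "0 < l z"
  shows "a z = M"
proof -
  have fin: "finite N" using assms(2) by (metis sum.infinite zero_neq_one)
  have nonneg: "\<forall>y\<in>N. 0 \<le> l y * (M - a y)"
    using weighted_le_weighted_bound[OF assms(1,3)] by (simp add: right_diff_distrib)
  have "(\<Sum>y\<in>N. l y * (M - a y)) = M - (\<Sum>y\<in>N. l y * a y)"
    using assms(2) by (simp add: right_diff_distrib sum_subtractf flip: sum_distrib_right)
  moreover have "0 \<le> (\<Sum>y\<in>N. l y * (M - a y))" using nonneg by (simp add: sum_nonneg)
  ultimately have "(\<Sum>y\<in>N. l y * (M - a y)) = 0" using assms(4) by linarith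
  then have "l z * (M - a z) = 0"
    using sum_nonneg_eq_0_iff[OF fin, of "\<lambda>y. l y * (M - a y)"] nonneg assms(5) by simp
  then show ?thesis using assms(6) by simp
qed

section \<open>Piecewise linear interpolation\<close>

lemma affine_interpolation_exists:
  fixes S :: "'a::euclidean_space set"
  assumes "finite S" and "\<not> affine_dependent S"
  shows "\<exists>a b. \<forall>s\<in>S. a \<bullet> s + b = w s"
proof (cases "S = {}")
  case False
  then obtain s0 where s0: "s0 \<in> S" by blast
  define B where "B = (\<lambda>x. x - s0) ` (S - {s0})"
  have "\<not> dependent B"
    using assms(2) affine_dependent_iff_dependent2[OF s0] unfolding B_def by simp
  then obtain g :: "'a \<Rightarrow> real" where g: "linear g" "\<forall>x\<in>B. g x = w (x + s0) - w s0"
    using linear_independent_extend[of B "\<lambda>x. w (x + s0) - w s0"] by blast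
  \<comment> \<open>the Riesz representer of the functional g\<close>
  define a where "a = adjoint g 1"
  have ga: "g x = a \<bullet> x" for x
    using adjoint_works[OF g(1), of x 1] unfolding a_def by (simp add: inner_commute)
  have "a \<bullet> s + (w s0 - a \<bullet> s0) = w s" if "s \<in> S" for s
  proof (cases "s = s0")
    case False
    then have "g (s - s0) = w s - w s0" using g(2) that unfolding B_def by auto
    then show ?thesis by (simp add: ga inner_diff_right)
  qed simp
  then show ?thesis by blast
qed simp

lemma affine_convex_comb:
  fixes a :: "'a::real_inner"
  assumes "sum l S = 1"
  shows "a \<bullet> (\<Sum>s\<in>S. l s *\<^sub>R s) + b = (\<Sum>s\<in>S. l s * (a \<bullet> s + b))"
proof -
  have "(\<Sum>s\<in>S. l s * (a \<bullet> s + b)) = (\<Sum>s\<in>S. l s * (a \<bullet> s)) + b * sum l S"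
    by (simp add: algebra_simps sum.distrib sum_distrib_left)
  then show ?thesis using assms by (simp add: inner_sum_right)
qed

lemma affine_eq_on_convex_hull:
  fixes S :: "'a::real_inner set"
  assumes "finite S" and "\<forall>s\<in>S. a \<bullet> s + b = a' \<bullet> s + b'" and "x \<in> convex hull S"
  shows "a \<bullet> x + b = a' \<bullet> x + b'"
proof -
  obtain l where l: "\<forall>s\<in>S. 0 \<le> l s" "sum l S = 1" "(\<Sum>s\<in>S. l s *\<^sub>R s) = x"
    using assms(3) convex_hull_finite[OF assms(1)] by auto
  show ?thesis
    using affine_convex_comb[OF l(2), of a b] affine_convex_comb[OF l(2), of a' b'] assms(2) l(3)
    by simp
qed

lemma mesh_simplexD:
  fixes S :: "'a::euclidean_space set"
  assumes "is_mesh T" and "S \<in> T"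
  shows "finite S" and "\<not> affine_dependent S" and "card S = DIM('a) + 1"
  using assms by (simp_all add: is_mesh_def simplex_vertices_def)

lemma finite_nodes: "is_mesh T \<Longrightarrow> finite (nodes T)"
  unfolding nodes_def by (rule finite_Union) (auto simp: is_mesh_def simplex_vertices_def)

lemma simplex_subset_nodes: "S \<in> T \<Longrightarrow> S \<subseteq> nodes T"
  unfolding nodes_def by blast

lemma P1_eq_if_eq_on_nodes:
  assumes "is_mesh T" and "u \<in> P1 T" and "u' \<in> P1 T" and "\<forall>z\<in>nodes T. u z = u' z"
  shows "u = u'"
proof
  fix x
  show "u x = u' x"
  proof (cases "x \<in> mesh_union T")
    case True
    then obtain S where S: "S \<in> T" "x \<in> convex hull S" unfolding mesh_union_def by blast
    obtain a b a' b' where ab: "\<forall>y\<in>convex hull S. u y = a \<bullet> y + b"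
      and ab': "\<forall>y\<in>convex hull S. u' y = a' \<bullet> y + b'"
      using assms(2,3) S(1) unfolding P1_def by blast
    have "a \<bullet> s + b = a' \<bullet> s + b'" if "s \<in> S" for s
    proof -
      have "s \<in> convex hull S" "s \<in> nodes T"
        using that hull_subset[of S convex] simplex_subset_nodes[OF S(1)] by blast+
      then show ?thesis using ab ab' assms(4) by metis
    qed
    then have "a \<bullet> x + b = a' \<bullet> x + b'"
      using affine_eq_on_convex_hull[OF mesh_simplexD(1)[OF assms(1) S(1)]] S(2) by blast
    then show ?thesis using ab ab' S(2) by simp
  qed (use assms(2,3) in \<open>simp add: P1_def\<close>)
qed

lemma P1_if_affine_on_simplices:
  fixes T :: "'a::euclidean_space set set"
  assumes mesh: "is_mesh T"
    and affine: "\<And>S x. S \<in> T \<Longrightarrow> x \<in> convex hull S \<Longrightarrow> u x = a S \<bullet> x + b S"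
    and outside: "\<And>x. x \<notin> mesh_union T \<Longrightarrow> u x = 0"
  shows "u \<in> P1 T"
proof -
  have "continuous_on (mesh_union T) u"
    unfolding mesh_union_def
  proof (rule continuous_on_closed_Union)
    show "finite T" using mesh by (simp add: is_mesh_def)
    fix S assume S: "S \<in> T"
    show "closed (convex hull S)"
      using mesh_simplexD(1)[OF mesh S] by (simp add: compact_imp_closed finite_imp_compact_convex_hull)
    have "continuous_on (convex hull S) (\<lambda>x. a S \<bullet> x + b S)"
      by (intro continuous_intros)
    then show "continuous_on (convex hull S) u"
      by (rule continuous_on_eq) (simp add: affine[OF S])
  qed
  then show ?thesis unfolding P1_def using affine outside by blast
qed

lemma interp_exists:
  fixes T :: "'a::euclidean_space set set"
  assumes mesh: "is_mesh T"
  shows "\<exists>u. u \<in> P1 T \<and> (\<forall>z\<in>nodes T. u z = w z)"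
proof -
  have "\<forall>S\<in>T. \<exists>ab. \<forall>s\<in>S. fst ab \<bullet> s + snd ab = w s"
  proof
    fix S assume S: "S \<in> T"
    obtain a b where "\<forall>s\<in>S. a \<bullet> s + b = w s"
      using affine_interpolation_exists mesh_simplexD[OF mesh S] by blast
    then show "\<exists>ab. \<forall>s\<in>S. fst ab \<bullet> s + snd ab = w s" by (intro exI[of _ "(a, b)"]) simp
  qed
  then obtain ab where ab: "\<forall>S\<in>T. \<forall>s\<in>S. fst (ab S) \<bullet> s + snd (ab S) = w s"
    by (rule bchoice[elim_format]) blast
  define sel where "sel x = (SOME S. S \<in> T \<and> x \<in> convex hull S)" for x
  define u where "u x = (if x \<in> mesh_union T then fst (ab (sel x)) \<bullet> x + snd (ab (sel x)) else 0)"
    for x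
  \<comment> \<open>Well defined by conformity: two simplices containing x share the face spanned by their
    common vertices, on which both affine pieces interpolate w.\<close>
  have u_on_simplex: "u x = fst (ab S) \<bullet> x + snd (ab S)" if S: "S \<in> T" "x \<in> convex hull S" for S x
  proof -
    have "\<exists>S. S \<in> T \<and> x \<in> convex hull S" using S by blast
    then have sel: "sel x \<in> T" "x \<in> convex hull (sel x)"
      unfolding sel_def by (rule someI_ex[elim_format]; blast)+
    have "convex hull S \<inter> convex hull (sel x) = convex hull (S \<inter> sel x)"
      using mesh S(1) sel(1) unfolding is_mesh_def by blast
    then have x: "x \<in> convex hull (S \<inter> sel x)" using S(2) sel(2) by blast
    have "\<forall>s\<in>S \<inter> sel x. fst (ab S) \<bullet> s + snd (ab S) = fst (ab (sel x)) \<bullet> s + snd (ab (sel x))"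
      using ab S(1) sel(1) by simp
    then have "fst (ab S) \<bullet> x + snd (ab S) = fst (ab (sel x)) \<bullet> x + snd (ab (sel x))"
      using affine_eq_on_convex_hull[OF _ _ x] mesh_simplexD(1)[OF mesh S(1)] by blast
    moreover have "x \<in> mesh_union T" using S unfolding mesh_union_def by blast
    ultimately show ?thesis unfolding u_def by simp
  qed
  have "u \<in> P1 T"
  proof (rule P1_if_affine_on_simplices[OF mesh])
    show "u x = fst (ab S) \<bullet> x + snd (ab S)" if "S \<in> T" "x \<in> convex hull S" for S x
      using u_on_simplex that .
    show "u x = 0" if "x \<notin> mesh_union T" for x using that by (simp add: u_def)
  qed
  moreover have "u z = w z" if z: "z \<in> nodes T" for z
  proof -
    obtain S where S: "S \<in> T" "z \<in> S" using z unfolding nodes_def by blast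
    then have "z \<in> convex hull S" using hull_subset[of S convex] by blast
    then show ?thesis using u_on_simplex[OF S(1)] ab S by simp
  qed
  ultimately show ?thesis by blast
qed

lemma interp_spec:
  assumes "is_mesh T"
  shows "interp T w \<in> P1 T \<and> (\<forall>z\<in>nodes T. interp T w z = w z)"
proof -
  obtain u where u: "u \<in> P1 T \<and> (\<forall>z\<in>nodes T. u z = w z)"
    using interp_exists[OF assms] by blast
  have "\<exists>!u. u \<in> P1 T \<and> (\<forall>z\<in>nodes T. u z = w z)"
  proof (rule ex1I)
    show "u \<in> P1 T \<and> (\<forall>z\<in>nodes T. u z = w z)" by (rule u)
    show "u' = u" if "u' \<in> P1 T \<and> (\<forall>z\<in>nodes T. u' z = w z)" for u'
      using P1_eq_if_eq_on_nodes[OF assms, of u' u] that u by simp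
  qed
  then show ?thesis unfolding interp_def by (rule theI')
qed

lemma interp_P1: "is_mesh T \<Longrightarrow> interp T w \<in> P1 T"
  using interp_spec by blast

lemma interp_node: "is_mesh T \<Longrightarrow> z \<in> nodes T \<Longrightarrow> interp T w z = w z"
  using interp_spec by blast

lemma interp_P1_self: "is_mesh T \<Longrightarrow> u \<in> P1 T \<Longrightarrow> interp T u = u"
  using P1_eq_if_eq_on_nodes[OF _ interp_P1] interp_node by blast

lemma interp_barycentric:
  fixes T :: "'a::euclidean_space set set"
  assumes mesh: "is_mesh T" and x: "x \<in> mesh_union T"
  obtains S l where "S \<in> T" and "\<forall>s\<in>S. 0 \<le> l s" and "sum l S = 1"
    and "(\<Sum>s\<in>S. l s *\<^sub>R s) = x" and "\<And>w. interp T w x = (\<Sum>s\<in>S. l s * w s)"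
proof -
  obtain S where S: "S \<in> T" "x \<in> convex hull S" using x unfolding mesh_union_def by blast
  have fin: "finite S" using mesh_simplexD(1)[OF mesh S(1)] .
  obtain l where l: "\<forall>s\<in>S. 0 \<le> l s" "sum l S = 1" "(\<Sum>s\<in>S. l s *\<^sub>R s) = x"
    using S(2) convex_hull_finite[OF fin] by auto
  have "interp T w x = (\<Sum>s\<in>S. l s * w s)" for w
  proof -
    obtain a b where ab: "\<forall>y\<in>convex hull S. interp T w y = a \<bullet> y + b"
      using interp_P1[OF mesh] S(1) unfolding P1_def by blast
    have "interp T w s = w s" if "s \<in> S" for s
      using interp_node[OF mesh] simplex_subset_nodes[OF S(1)] that by blast
    then have "\<forall>s\<in>S. a \<bullet> s + b = w s" using ab hull_subset[of S convex] by force
    then show ?thesis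
      using ab S(2) affine_convex_comb[OF l(2), of a b] l(3) by simp
  qed
  then show ?thesis using that S(1) l by blast
qed

lemma hat_partition_of_unity:
  fixes T :: "'a::euclidean_space set set"
  assumes mesh: "is_mesh T" and x: "x \<in> mesh_union T"
  shows hat_nonneg: "0 \<le> hat T z x"
    and sum_hat: "(\<Sum>z\<in>nodes T. hat T z x) = 1"
    and sum_hat_scaleR: "(\<Sum>z\<in>nodes T. hat T z x *\<^sub>R z) = x"
    and interp_eq_sum_hat: "interp T w x = (\<Sum>z\<in>nodes T. hat T z x * w z)"
proof -
  obtain S l where S: "S \<in> T" and l: "\<forall>s\<in>S. 0 \<le> l s" "sum l S = 1" "(\<Sum>s\<in>S. l s *\<^sub>R s) = x"
    and I: "\<And>w. interp T w x = (\<Sum>s\<in>S. l s * w s)"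
    using interp_barycentric[OF mesh x] by blast
  have fin: "finite (nodes T)" using finite_nodes[OF mesh] .
  have SN: "nodes T \<inter> S = S" using simplex_subset_nodes[OF S] by blast
  have hat: "hat T z x = (if z \<in> S then l z else 0)" for z
    using mesh_simplexD(1)[OF mesh S] unfolding hat_def I by (simp add: if_distrib cong: if_cong)
  show "0 \<le> hat T z x" using hat l(1) by simp
  have sum_w: "(\<Sum>z\<in>nodes T. hat T z x * w z) = (\<Sum>s\<in>S. l s * w s)" for w
  proof -
    have "(\<Sum>z\<in>nodes T. hat T z x * w z) = (\<Sum>z\<in>nodes T. if z \<in> S then l z * w z else 0)"
      by (rule sum.cong) (simp_all add: hat)
    then show ?thesis using sum.inter_restrict[OF fin, of "\<lambda>z. l z * w z" S] SN by simp
  qed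
  from this[of "\<lambda>_. 1"] show "(\<Sum>z\<in>nodes T. hat T z x) = 1" using l(2) by simp
  show "interp T w x = (\<Sum>z\<in>nodes T. hat T z x * w z)" using I by (simp add: sum_w)
  have "(\<Sum>z\<in>nodes T. hat T z x *\<^sub>R z) = (\<Sum>z\<in>nodes T. if z \<in> S then l z *\<^sub>R z else 0)"
    by (rule sum.cong) (simp_all add: hat)
  then show "(\<Sum>z\<in>nodes T. hat T z x *\<^sub>R z) = x"
    using sum.inter_restrict[OF fin, of "\<lambda>z. l z *\<^sub>R z" S] SN l(3) by simp
qed

lemma interp_le_if_le_on_hat_support:
  assumes "is_mesh T" and "x \<in> mesh_union T" and "\<forall>z\<in>nodes T. 0 < hat T z x \<longrightarrow> w z \<le> M"
  shows "interp T w x \<le> M"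
  unfolding interp_eq_sum_hat[OF assms(1,2)]
  using convex_comb_le[OF _ sum_hat[OF assms(1,2)] assms(3)] hat_nonneg[OF assms(1,2)] by blast

lemma eq_on_hat_support_if_interp_ge:
  assumes "is_mesh T" and "x \<in> mesh_union T" and "\<forall>z\<in>nodes T. 0 < hat T z x \<longrightarrow> w z \<le> M"
    and "M \<le> interp T w x" and "z \<in> nodes T" and "0 < hat T z x"
  shows "w z = M"
  using convex_comb_eq_bound[OF _ sum_hat[OF assms(1,2)] assms(3) _ assms(5,6)]
    hat_nonneg[OF assms(1,2)] interp_eq_sum_hat[OF assms(1,2)] assms(4) by simp

lemma eq_on_hat_support_if_interp_touches:
  assumes "is_mesh T" and "x \<in> mesh_union T" and "\<forall>y\<in>nodes T. u y \<le> w y"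
    and "interp T w x \<le> interp T u x" and "z \<in> nodes T" and "0 < hat T z x"
  shows "u z = w z"
proof -
  have "interp T (\<lambda>y. u y - w y) x = interp T u x - interp T w x"
    using interp_eq_sum_hat[OF assms(1,2)] by (simp add: right_diff_distrib sum_subtractf)
  then have "u z - w z = 0"
    using eq_on_hat_support_if_interp_ge[OF assms(1,2) _ _ assms(5,6), of "\<lambda>y. u y - w y" 0]
      assms(3,4) by simp
  then show ?thesis by simp
qed

lemma le_bound_on_hat_support_if_interp_touches:
  assumes "is_mesh T" and "x \<in> mesh_union T" and "\<forall>y\<in>nodes T. u y \<le> w y"
    and "interp T w x \<le> interp T u x" and "\<forall>y\<in>nodes T. u y = w y \<longrightarrow> u y \<le> M"
  shows "\<forall>z\<in>nodes T. 0 < hat T z x \<longrightarrow> u z \<le> M"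
  using eq_on_hat_support_if_interp_touches[OF assms(1-4)] assms(5) by simp

lemma interp_mono:
  assumes "is_mesh T" and "x \<in> mesh_union T" and "\<forall>y\<in>nodes T. u y \<le> w y"
  shows "interp T u x \<le> interp T w x"
  unfolding interp_eq_sum_hat[OF assms(1,2)]
  using assms(3) hat_nonneg[OF assms(1,2)] by (intro sum_mono mult_left_mono) auto

lemma interp_affine:
  assumes "is_mesh T" and "x \<in> mesh_union T"
  shows "interp T (\<lambda>y. c * w y + d) x = c * interp T w x + d"
proof -
  have "(\<Sum>z\<in>nodes T. hat T z x * (c * w z + d))
      = c * (\<Sum>z\<in>nodes T. hat T z x * w z) + d * (\<Sum>z\<in>nodes T. hat T z x)"
    by (simp add: algebra_simps sum.distrib sum_distrib_left)
  then show ?thesis unfolding interp_eq_sum_hat[OF assms] sum_hat[OF assms] by simp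
qed

lemma P1_abs_le_if_abs_le_on_nodes:
  assumes "is_mesh T" and "u \<in> P1 T" and "\<forall>y\<in>nodes T. \<bar>u y\<bar> \<le> R" and "x \<in> mesh_union T"
  shows "\<bar>u x\<bar> \<le> R"
proof -
  have "\<bar>u x\<bar> = \<bar>\<Sum>z\<in>nodes T. hat T z x * u z\<bar>"
    using interp_eq_sum_hat[OF assms(1,4), of u] interp_P1_self[OF assms(1,2)] by simp
  also have "\<dots> \<le> (\<Sum>z\<in>nodes T. hat T z x * \<bar>u z\<bar>)"
    using sum_abs[of "\<lambda>z. hat T z x * u z"] hat_nonneg[OF assms(1,4)] by (simp add: abs_mult)
  also have "\<dots> \<le> R"
    using convex_comb_le[OF _ sum_hat[OF assms(1,4)]] hat_nonneg[OF assms(1,4)] assms(3) by simp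
  finally show ?thesis .
qed

lemma interp_paraboloid_le:
  fixes T :: "'a::euclidean_space set set"
  assumes mesh: "is_mesh T" and x: "x \<in> mesh_union T" and A: "0 \<le> A"
  shows "interp T (\<lambda>y. K - A * (norm (y - x0))\<^sup>2) x \<le> K - A * (norm (x - x0))\<^sup>2"
proof -
  let ?l = "\<lambda>z. hat T z x" and ?N = "nodes T"
  have l: "\<forall>z\<in>?N. 0 \<le> ?l z" "sum ?l ?N = 1" using hat_partition_of_unity[OF mesh x] by auto
  have N: "finite ?N" "?N \<noteq> {}" using finite_nodes[OF mesh] l(2) by auto
  have "(\<Sum>z\<in>?N. ?l z *\<^sub>R (z - x0)) = x - x0"
    using sum_hat_scaleR[OF mesh x] l(2)
    by (simp add: scaleR_diff_right sum_subtractf flip: scaleR_sum_left)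
  then have "norm (x - x0) \<le> (\<Sum>z\<in>?N. ?l z * norm (z - x0))"
    using norm_sum[of "\<lambda>z. ?l z *\<^sub>R (z - x0)" ?N] l(1) by simp
  then have "(norm (x - x0))\<^sup>2 \<le> (\<Sum>z\<in>?N. ?l z * norm (z - x0))\<^sup>2"
    by (simp add: power_mono)
  also have "\<dots> \<le> (\<Sum>z\<in>?N. ?l z * (norm (z - x0))\<^sup>2)"
    using convex_on_sum[OF N convex_power2, of ?l "\<lambda>z. norm (z - x0)"] l by simp
  finally have "A * (norm (x - x0))\<^sup>2 \<le> A * (\<Sum>z\<in>?N. ?l z * (norm (z - x0))\<^sup>2)"
    using A by (rule mult_left_mono)
  moreover have "(\<Sum>z\<in>?N. ?l z * (K - A * (norm (z - x0))\<^sup>2))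
      = K * sum ?l ?N - A * (\<Sum>z\<in>?N. ?l z * (norm (z - x0))\<^sup>2)"
    by (simp add: algebra_simps sum_subtractf sum_distrib_left)
  ultimately show ?thesis unfolding interp_eq_sum_hat[OF mesh x] l(2) by simp
qed

section \<open>The discrete operator\<close>

lemma finite_stencil: "finite S\<theta> \<Longrightarrow> finite (stencil \<epsilon> S\<theta> z)"
  unfolding stencil_def by simp

lemma center_in_stencil: "z \<in> stencil \<epsilon> S\<theta> z"
  unfolding stencil_def by simp

lemma stencil_point_in_stencil: "v \<in> S\<theta> \<Longrightarrow> z + \<epsilon> *\<^sub>R v \<in> stencil \<epsilon> S\<theta> z"
  unfolding stencil_def by blast

lemma disc_inf_lap_mono_bound:
  fixes T :: "'a::euclidean_space set set"
  assumes mesh: "is_mesh T" and "0 < \<epsilon>" and "finite S\<theta>"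
    and St: "stencil \<epsilon> S\<theta> z \<subseteq> mesh_union T" and le: "\<forall>y\<in>nodes T. u y \<le> w y"
  shows "disc_inf_lap T \<epsilon> S\<theta> w z - 2 * (w z - u z) / \<epsilon>\<^sup>2 \<le> disc_inf_lap T \<epsilon> S\<theta> u z"
proof -
  let ?St = "stencil \<epsilon> S\<theta> z"
  have St_fin: "finite ?St" "?St \<noteq> {}" using assms(3) finite_stencil center_in_stencil by blast+
  have "\<forall>p\<in>?St. interp T u p \<le> interp T w p" using interp_mono[OF mesh _ le] St by blast
  then have "Max (interp T u ` ?St) \<le> Max (interp T w ` ?St)"
    and "Min (interp T u ` ?St) \<le> Min (interp T w ` ?St)"
    using Max_image_mono[OF St_fin] Min_image_mono[OF St_fin] by blast+
  then have "2 * w z - Max (interp T w ` ?St) - Min (interp T w ` ?St) - 2 * (w z - u z)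
      \<le> 2 * u z - Max (interp T u ` ?St) - Min (interp T u ` ?St)" by argo
  then show ?thesis
    unfolding disc_inf_lap_def using assms(2) by (simp add: divide_right_mono flip: diff_divide_distrib)
qed

lemma disc_inf_lap_affine:
  fixes T :: "'a::euclidean_space set set"
  assumes mesh: "is_mesh T" and "finite S\<theta>" and "0 \<le> c"
    and St: "stencil \<epsilon> S\<theta> z \<subseteq> mesh_union T"
  shows "disc_inf_lap T \<epsilon> S\<theta> (\<lambda>y. c * w y + d) z = c * disc_inf_lap T \<epsilon> S\<theta> w z"
proof -
  let ?St = "stencil \<epsilon> S\<theta> z" and ?g = "\<lambda>t::real. c * t + d"
  have St_fin: "finite (interp T w ` ?St)" "interp T w ` ?St \<noteq> {}"
    using assms(2) finite_stencil center_in_stencil by blast+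
  have img: "interp T (\<lambda>y. c * w y + d) ` ?St = ?g ` interp T w ` ?St"
    unfolding image_image using interp_affine[OF mesh] St by (intro image_cong) auto
  have "mono ?g" using assms(3) by (auto simp: mono_def mult_left_mono)
  then have "Max (?g ` interp T w ` ?St) = ?g (Max (interp T w ` ?St))"
    and "Min (?g ` interp T w ` ?St) = ?g (Min (interp T w ` ?St))"
    using mono_Max_commute mono_Min_commute St_fin by metis+
  then show ?thesis unfolding disc_inf_lap_def img by (simp add: algebra_simps)
qed

lemma disc_inf_lap_paraboloid:
  fixes T :: "'a::euclidean_space set set"
  assumes mesh: "is_mesh T" and eps: "0 < \<epsilon>" and "finite S\<theta>" and "S\<theta> \<noteq> {}"
    and sym: "\<forall>v\<in>S\<theta>. norm v = 1 \<and> - v \<in> S\<theta>"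
    and St: "stencil \<epsilon> S\<theta> z \<subseteq> mesh_union T" and z: "z \<in> nodes T" and A: "0 \<le> A"
  shows "A \<le> disc_inf_lap T \<epsilon> S\<theta> (\<lambda>y. K - A * (norm (y - x0))\<^sup>2) z"
proof -
  let ?St = "stencil \<epsilon> S\<theta> z"
  define q where "q y = K - A * (norm (y - x0))\<^sup>2" for y
  let ?I = "interp T q"
  have St_fin: "finite (?I ` ?St)" using assms(3) finite_stencil by blast
  have I_le: "?I p \<le> q p" if "p \<in> ?St" for p
    using interp_paraboloid_le[OF mesh _ A] St that unfolding q_def by blast
  have Min_le: "Min (?I ` ?St) \<le> q p" if "p \<in> ?St" for p
    using Min_le[OF St_fin] I_le[OF that] that by (meson imageI order_trans)
  have opposite: "q (z + \<epsilon> *\<^sub>R v) + q (z + \<epsilon> *\<^sub>R (- v)) = 2 * q z - 2 * A * \<epsilon>\<^sup>2"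
    if "v \<in> S\<theta>" for v
  proof -
    have "v \<bullet> v = 1" using sym that by (simp add: norm_eq_1)
    then have n: "(norm (z + \<epsilon> *\<^sub>R v - x0))\<^sup>2 + (norm (z + \<epsilon> *\<^sub>R (- v) - x0))\<^sup>2
        = 2 * (norm (z - x0))\<^sup>2 + 2 * \<epsilon>\<^sup>2"
      unfolding power2_norm_eq_inner
      by (simp add: inner_add_left inner_add_right inner_diff_left inner_diff_right
          inner_commute power2_eq_square)
    have "q (z + \<epsilon> *\<^sub>R v) + q (z + \<epsilon> *\<^sub>R (- v))
        = 2 * K - A * ((norm (z + \<epsilon> *\<^sub>R v - x0))\<^sup>2 + (norm (z + \<epsilon> *\<^sub>R (- v) - x0))\<^sup>2)"
      unfolding q_def by (simp add: algebra_simps)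
    then show ?thesis unfolding n q_def by (simp add: algebra_simps)
  qed
  have "Max (?I ` ?St) \<in> ?I ` ?St" using Max_in[OF St_fin] center_in_stencil by blast
  then obtain p where p: "p \<in> ?St" "?I p = Max (?I ` ?St)" by (metis imageE)
  have "A * \<epsilon>\<^sup>2 \<le> 2 * q z - Max (?I ` ?St) - Min (?I ` ?St)"
  proof (cases "p = z")
    case True
    obtain v where v: "v \<in> S\<theta>" using assms(4) by blast
    have "Min (?I ` ?St) \<le> q (z + \<epsilon> *\<^sub>R v)" "Min (?I ` ?St) \<le> q (z + \<epsilon> *\<^sub>R (- v))"
      using Min_le stencil_point_in_stencil v sym by blast+
    moreover have "Max (?I ` ?St) = q z" using p True interp_node[OF mesh z] by simp
    ultimately show ?thesis using opposite[OF v] by linarith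
  next
    case False
    then obtain v where v: "v \<in> S\<theta>" "p = z + \<epsilon> *\<^sub>R v" using p(1) unfolding stencil_def by blast
    have "Max (?I ` ?St) \<le> q (z + \<epsilon> *\<^sub>R v)" using I_le[OF p(1)] p(2) v(2) by simp
    moreover have "Min (?I ` ?St) \<le> q (z + \<epsilon> *\<^sub>R (- v))"
      using Min_le stencil_point_in_stencil v(1) sym by blast
    moreover have "0 \<le> A * \<epsilon>\<^sup>2" using A by simp
    ultimately show ?thesis using opposite[OF v(1)] by linarith
  qed
  then have "A \<le> (2 * q z - Max (?I ` ?St) - Min (?I ` ?St)) / \<epsilon>\<^sup>2"
    using eps by (simp add: pos_le_divide_eq)
  then show ?thesis unfolding disc_inf_lap_def q_def by simp
qed


section \<open>Geometry of the mesh\<close>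

lemma mesh_size_pos:
  fixes T :: "'a::euclidean_space set set"
  assumes mesh: "is_mesh T"
  shows "0 < mesh_size T"
proof -
  obtain S where S: "S \<in> T" using mesh unfolding is_mesh_def by blast
  have "\<not> card S \<le> Suc 0" using mesh_simplexD(3)[OF mesh S] DIM_positive[where 'a='a] by linarith
  then obtain a b where ab: "a \<in> S" "b \<in> S" "a \<noteq> b"
    using card_le_Suc0_iff_eq[OF mesh_simplexD(1)[OF mesh S]] by blast
  have "bounded (convex hull S)"
    using mesh_simplexD(1)[OF mesh S] by (simp add: finite_imp_bounded_convex_hull)
  then have "dist a b \<le> diameter (convex hull S)"
    using diameter_bounded_bound ab(1,2) hull_subset[of S convex] by blast
  also have "\<dots> \<le> mesh_size T"
    unfolding mesh_size_def using mesh S by (intro Max_ge) (auto simp: is_mesh_def)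
  finally show ?thesis using ab(3) zero_less_dist_iff[of a b] by linarith
qed

lemma inner_set_near_point:
  fixes \<Omega> :: "'a::euclidean_space set"
  assumes z: "z \<in> inner_set \<Omega> r" and near: "dist z p + h \<le> r" and h: "0 \<le> h"
  shows "p \<in> inner_set \<Omega> h"
proof -
  have "z \<in> \<Omega>" and far: "r < infdist z (frontier \<Omega>)" using z unfolding inner_set_def by auto
  have "p \<in> \<Omega>"
  proof (rule ccontr)
    assume "p \<notin> \<Omega>"
    then have "closed_segment z p \<inter> frontier \<Omega> \<noteq> {}"
      using \<open>z \<in> \<Omega>\<close> by (intro connected_Int_frontier) auto
    then obtain y where "y \<in> closed_segment z p" "y \<in> frontier \<Omega>" by blast
    then have "infdist z (frontier \<Omega>) \<le> dist z p"
      using infdist_le[of y "frontier \<Omega>" z] dist_in_closed_segment[of y z p]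
      by (simp add: dist_commute)
    then show False using far near h by linarith
  qed
  moreover have "h < infdist p (frontier \<Omega>)"
    using infdist_triangle[of z "frontier \<Omega>" p] far near by linarith
  ultimately show ?thesis unfolding inner_set_def by blast
qed

lemma nodes_subset_closure:
  fixes T :: "'a::euclidean_space set set"
  assumes mesh: "is_mesh T" and "mesh_domain T \<subseteq> \<Omega>"
  shows "nodes T \<subseteq> closure \<Omega>"
proof
  fix s assume "s \<in> nodes T"
  then obtain S where S: "S \<in> T" "s \<in> S" unfolding nodes_def by blast
  have "card S = Suc DIM('a)" "\<not> affine_dependent S" using mesh_simplexD[OF mesh S(1)] by auto
  then have nonempty: "interior (convex hull S) \<noteq> {}" using interior_convex_hull_eq_empty by blast
  have "s \<in> closure (convex hull S)" using S(2) hull_subset[of S convex] closure_subset by blast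
  also have "\<dots> = closure (interior (convex hull S))"
    using convex_closure_interior[OF convex_convex_hull nonempty] by simp
  also have "\<dots> \<subseteq> closure \<Omega>"
  proof (rule closure_mono)
    have "convex hull S \<subseteq> mesh_union T" using S(1) unfolding mesh_union_def by blast
    then show "interior (convex hull S) \<subseteq> \<Omega>"
      using interior_mono assms(2) unfolding mesh_domain_def by blast
  qed
  finally show "s \<in> closure \<Omega>" .
qed

lemma stencil_dirs_nonempty:
  assumes "stencil_dirs S\<theta> (\<theta>::real)"
  shows "(S\<theta> :: 'a::euclidean_space set) \<noteq> {}"
proof -
  obtain b :: 'a where "b \<in> Basis" using nonempty_Basis by blast
  then have "norm b = 1" by simp
  then show ?thesis using assms unfolding stencil_dirs_def by blast
qed


section \<open>Comparison principle and existence\<close>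

locale obstacle_scheme =
  fixes \<Omega> :: "'a::euclidean_space set" and T :: "'a set set" and \<epsilon> :: real and S\<theta> :: "'a set"
  assumes mesh: "is_mesh T"
    and inner_subset_mesh_domain: "inner_set \<Omega> (mesh_size T) \<subseteq> mesh_domain T"
    and mesh_domain_subset: "mesh_domain T \<subseteq> \<Omega>"
    and mesh_size_le: "mesh_size T \<le> \<epsilon>"
    and finite_dirs: "finite S\<theta>"
    and dirs_nonempty: "S\<theta> \<noteq> {}"
    and unit_dirs: "\<forall>v\<in>S\<theta>. norm v = 1 \<and> - v \<in> S\<theta>"
begin

abbreviation "IN \<equiv> interior_nodes \<Omega> T \<epsilon>"
abbreviation "BN \<equiv> boundary_nodes \<Omega> T \<epsilon>"
abbreviation "lap \<equiv> disc_inf_lap T \<epsilon> S\<theta>"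
abbreviation "solution \<equiv> disc_obstacle_sol \<Omega> T \<epsilon> S\<theta>"

lemma eps_pos: "0 < \<epsilon>"
  using mesh_size_pos[OF mesh] mesh_size_le by linarith

lemma IN_subset_nodes: "IN \<subseteq> nodes T"
  unfolding interior_nodes_def by blast

lemma BN_subset_nodes: "BN \<subseteq> nodes T"
  unfolding boundary_nodes_def by blast

lemma BN_if_not_IN: "y \<in> nodes T \<Longrightarrow> y \<notin> IN \<Longrightarrow> y \<in> BN"
  unfolding boundary_nodes_def by blast

lemma IN_not_BN: "z \<in> IN \<Longrightarrow> z \<notin> BN"
  unfolding boundary_nodes_def by blast

lemma finite_BN: "finite BN"
  using finite_subset[OF BN_subset_nodes finite_nodes[OF mesh]] .

lemma stencil_subset_mesh_domain:
  assumes z: "z \<in> IN"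
  shows "stencil \<epsilon> S\<theta> z \<subseteq> mesh_domain T"
proof
  fix p assume "p \<in> stencil \<epsilon> S\<theta> z"
  then have "dist z p \<le> \<epsilon>"
    using unit_dirs eps_pos unfolding stencil_def by (auto simp: dist_norm)
  moreover have "z \<in> inner_set \<Omega> (2 * \<epsilon>)" using z unfolding interior_nodes_def by blast
  ultimately have "p \<in> inner_set \<Omega> (mesh_size T)"
    using inner_set_near_point mesh_size_le mesh_size_pos[OF mesh] by fastforce
  then show "p \<in> mesh_domain T" using inner_subset_mesh_domain by blast
qed

lemma IN_subset_mesh_domain: "z \<in> IN \<Longrightarrow> z \<in> mesh_domain T"
  using stencil_subset_mesh_domain center_in_stencil by blast

lemma stencil_subset_mesh_union: "z \<in> IN \<Longrightarrow> stencil \<epsilon> S\<theta> z \<subseteq> mesh_union T"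
  using stencil_subset_mesh_domain interior_subset unfolding mesh_domain_def by blast

lemma lap_mono_bound:
  "z \<in> IN \<Longrightarrow> \<forall>y\<in>nodes T. u y \<le> w y \<Longrightarrow> lap w z - 2 * (w z - u z) / \<epsilon>\<^sup>2 \<le> lap u z"
  using disc_inf_lap_mono_bound[OF mesh eps_pos finite_dirs stencil_subset_mesh_union] .

lemma lap_affine: "z \<in> IN \<Longrightarrow> 0 \<le> c \<Longrightarrow> lap (\<lambda>y. c * w y + d) z = c * lap w z"
  using disc_inf_lap_affine[OF mesh finite_dirs _ stencil_subset_mesh_union] .

lemma lap_touching_mono:
  assumes "z \<in> IN" and "\<forall>y\<in>nodes T. u y \<le> w y + c" and "u z = w z + c"
  shows "lap w z \<le> lap u z"
  using lap_mono_bound[OF assms(1), of u "\<lambda>y. 1 * w y + c"] lap_affine[OF assms(1), of 1 w c] assms(2,3)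
  by simp

lemma lap_paraboloid: "z \<in> IN \<Longrightarrow> 0 \<le> A \<Longrightarrow> A \<le> lap (\<lambda>y. K - A * (norm (y - x0))\<^sup>2) z"
  using disc_inf_lap_paraboloid[OF mesh eps_pos finite_dirs dirs_nonempty unit_dirs
      stencil_subset_mesh_union] IN_subset_nodes by blast

lemma solutionD:
  assumes "solution f obs g u"
  shows "u \<in> P1 T" and "z \<in> IN \<Longrightarrow> f z \<le> lap u z" and "z \<in> IN \<Longrightarrow> obs z \<le> u z"
    and "z \<in> IN \<Longrightarrow> obs z < u z \<Longrightarrow> lap u z = f z" and "z \<in> BN \<Longrightarrow> u z = g z"
  using assms unfolding disc_obstacle_sol_def by (auto simp: min_def split: if_splits)

lemma comparison:
  assumes sol: "solution f obs g u"
    and super: "\<forall>z\<in>IN. f z < lap w z \<and> obs z \<le> w z" and boundary: "\<forall>z\<in>BN. u z \<le> w z"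
  shows "\<forall>y\<in>nodes T. u y \<le> w y"
proof (rule ccontr)
  assume "\<not> (\<forall>y\<in>nodes T. u y \<le> w y)"
  then obtain y0 where y0: "y0 \<in> nodes T" "w y0 < u y0" by force
  define M where "M = Max ((\<lambda>y. u y - w y) ` nodes T)"
  have fin: "finite ((\<lambda>y. u y - w y) ` nodes T)" using finite_nodes[OF mesh] by simp
  obtain z where z: "z \<in> nodes T" "u z = w z + M"
    using Max_in[OF fin] y0(1) unfolding M_def by fastforce
  have le: "\<forall>y\<in>nodes T. u y \<le> w y + M" using Max_ge[OF fin] unfolding M_def by fastforce
  have "0 < M" using le y0 by fastforce
  then have "z \<in> IN" using BN_if_not_IN[OF z(1)] boundary z(2) by fastforce
  then have "lap u z = f z" using solutionD(4)[OF sol] super z(2) \<open>0 < M\<close> by fastforce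
  moreover have "lap w z \<le> lap u z" using lap_touching_mono[OF \<open>z \<in> IN\<close> le z(2)] .
  ultimately show False using super \<open>z \<in> IN\<close> by fastforce
qed

definition supersolution :: "('a \<Rightarrow> real) \<Rightarrow> ('a \<Rightarrow> real) \<Rightarrow> ('a \<Rightarrow> real) \<Rightarrow> ('a \<Rightarrow> real) \<Rightarrow> bool"
  where "supersolution f obs g w \<longleftrightarrow>
    (\<forall>z\<in>IN. f z \<le> lap w z \<and> obs z \<le> w z) \<and> (\<forall>z\<in>BN. w z = g z)"

lemma supersolution_exists: "\<exists>w. supersolution f obs g w"
proof -
  define A where "A = (\<Sum>z\<in>IN. \<bar>f z\<bar>)"
  define K where "K = (\<Sum>y\<in>nodes T. \<bar>g y\<bar> + \<bar>obs y\<bar> + A * (norm y)\<^sup>2)"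
  define q where "q y = K - A * (norm y)\<^sup>2" for y :: 'a
  define w where "w y = (if y \<in> BN then g y else q y)" for y
  have finite_IN: "finite IN" using finite_subset[OF IN_subset_nodes finite_nodes[OF mesh]] .
  have "0 \<le> A" unfolding A_def by (simp add: sum_nonneg)
  have f_le: "f z \<le> A" if "z \<in> IN" for z
    using member_le_sum[of z IN "\<lambda>z. \<bar>f z\<bar>"] finite_IN that unfolding A_def by simp
  have q_ge: "\<bar>g y\<bar> + \<bar>obs y\<bar> \<le> q y" if "y \<in> nodes T" for y
    using member_le_sum[of y "nodes T" "\<lambda>y. \<bar>g y\<bar> + \<bar>obs y\<bar> + A * (norm y)\<^sup>2"]
      finite_nodes[OF mesh] that \<open>0 \<le> A\<close> unfolding K_def q_def by simp
  have w_le_q: "\<forall>y\<in>nodes T. w y \<le> q y + 0" using q_ge unfolding w_def by fastforce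
  have "f z \<le> lap w z \<and> obs z \<le> w z" if z: "z \<in> IN" for z
  proof -
    have "w z = q z + 0" unfolding w_def using IN_not_BN[OF z] by simp
    then have "lap q z \<le> lap w z" using lap_touching_mono[OF z w_le_q] by blast
    moreover have "A \<le> lap q z" unfolding q_def using lap_paraboloid[OF z \<open>0 \<le> A\<close>, of K 0] by simp
    moreover have "obs z \<le> q z" using q_ge z IN_subset_nodes by fastforce
    ultimately show ?thesis using f_le[OF z] IN_not_BN[OF z] unfolding w_def by simp
  qed
  then have "supersolution f obs g w" unfolding supersolution_def w_def by simp
  then show ?thesis by blast
qed

lemma lap_ge_if_approximated:
  assumes z: "z \<in> IN"
    and approx: "\<And>\<eta>. 0 < \<eta> \<Longrightarrow> \<exists>w. f z \<le> lap w z \<and> (\<forall>y\<in>nodes T. u y \<le> w y) \<and> w z < u z + \<eta>"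
  shows "f z \<le> lap u z"
proof (rule field_le_epsilon)
  fix e :: real assume "0 < e"
  then obtain w where w: "f z \<le> lap w z" "\<forall>y\<in>nodes T. u y \<le> w y" "w z < u z + e * \<epsilon>\<^sup>2 / 2"
    using approx[of "e * \<epsilon>\<^sup>2 / 2"] eps_pos by auto
  have "2 * (w z - u z) \<le> e * \<epsilon>\<^sup>2" using w(3) by (simp add: field_simps)
  then have "2 * (w z - u z) / \<epsilon>\<^sup>2 \<le> e" using eps_pos by (simp add: pos_divide_le_eq)
  then show "f z \<le> lap u z + e" using lap_mono_bound[OF z w(2)] w(1) by linarith
qed

lemma supersolution_values_bdd_below:
  assumes y: "y \<in> nodes T"
  shows "bdd_below ((\<lambda>w. w y) ` {w. supersolution f obs g w})"
proof (cases "y \<in> IN")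
  case True
  then show ?thesis by (intro bdd_belowI2[of _ "obs y"]) (simp add: supersolution_def)
next
  case False
  then show ?thesis using BN_if_not_IN[OF y]
    by (intro bdd_belowI2[of _ "g y"]) (simp add: supersolution_def)
qed

lemma least_supersolution_exists:
  "\<exists>u\<in>P1 T. supersolution f obs g u \<and> (\<forall>w. supersolution f obs g w \<longrightarrow> (\<forall>y\<in>nodes T. u y \<le> w y))"
proof -
  let ?S = "{w. supersolution f obs g w}"
  have S_nonempty: "?S \<noteq> {}" using supersolution_exists by blast
  define u where "u = interp T (\<lambda>y. Inf ((\<lambda>w. w y) ` ?S))"
  have u_node: "u y = Inf ((\<lambda>w. w y) ` ?S)" if "y \<in> nodes T" for y
    unfolding u_def using interp_node[OF mesh that] .
  have least: "\<forall>y\<in>nodes T. u y \<le> w y" if "w \<in> ?S" for w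
    using u_node cInf_lower[OF imageI[OF that] supersolution_values_bdd_below] by simp
  have "f z \<le> lap u z \<and> obs z \<le> u z" if z: "z \<in> IN" for z
  proof
    have zn: "z \<in> nodes T" using z IN_subset_nodes by blast
    show "f z \<le> lap u z"
    proof (rule lap_ge_if_approximated[OF z])
      fix \<eta> :: real assume "0 < \<eta>"
      then obtain w where "w \<in> ?S" "w z < u z + \<eta>"
        using cInf_lessD[of "(\<lambda>w. w z) ` ?S" "u z + \<eta>"] S_nonempty u_node[OF zn] by auto
      then show "\<exists>w. f z \<le> lap w z \<and> (\<forall>y\<in>nodes T. u y \<le> w y) \<and> w z < u z + \<eta>"
        using least z unfolding supersolution_def by blast
    qed
    show "obs z \<le> u z"
      using u_node[OF zn] S_nonempty z by (auto intro!: cInf_greatest simp: supersolution_def)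
  qed
  moreover have "u z = g z" if z: "z \<in> BN" for z
  proof -
    have "(\<lambda>w. w z) ` ?S = {g z}" using S_nonempty z unfolding supersolution_def by auto
    then show ?thesis using u_node z BN_subset_nodes by auto
  qed
  ultimately show ?thesis
    using least interp_P1[OF mesh] unfolding supersolution_def u_def by blast
qed

lemma least_supersolution_solves:
  assumes u: "u \<in> P1 T" "supersolution f obs g u"
    and least: "\<forall>w. supersolution f obs g w \<longrightarrow> (\<forall>y\<in>nodes T. u y \<le> w y)"
  shows "solution f obs g u"
proof -
  have "min (lap u z - f z) (u z - obs z) = 0" if z: "z \<in> IN" for z
  proof (rule ccontr)
    assume "min (lap u z - f z) (u z - obs z) \<noteq> 0"
    then have gaps: "0 < lap u z - f z" "0 < u z - obs z"
      using u(2) z unfolding supersolution_def by (auto simp: min_def split: if_splits)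
    \<comment> \<open>both gaps are positive, so lowering u at z a little gives a smaller supersolution\<close>
    define t where "t = min ((lap u z - f z) * \<epsilon>\<^sup>2 / 2) (u z - obs z)"
    define w where "w y = (if y = z then u z - t else u y)" for y
    have t: "0 < t" "2 * t / \<epsilon>\<^sup>2 \<le> lap u z - f z" "t \<le> u z - obs z"
      using gaps eps_pos by (auto simp: t_def min_def pos_divide_le_eq mult.commute)
    have w_le: "\<forall>y\<in>nodes T. w y \<le> u y + 0" using t(1) unfolding w_def by simp
    have "f y \<le> lap w y" if y: "y \<in> IN" for y
    proof (cases "y = z")
      case True
      then show ?thesis using lap_mono_bound[OF z, of w u] w_le t(2) unfolding w_def by simp
    next
      case False
      then have "lap u y \<le> lap w y" using lap_touching_mono[OF y w_le] unfolding w_def by simp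
      then show ?thesis using u(2) y unfolding supersolution_def by fastforce
    qed
    moreover have "obs y \<le> w y" if "y \<in> IN" for y
      using u(2) t(3) that unfolding supersolution_def w_def by auto
    moreover have "w y = g y" if "y \<in> BN" for y
      using u(2) IN_not_BN[OF z] that unfolding supersolution_def w_def by auto
    ultimately have "supersolution f obs g w" unfolding supersolution_def by blast
    then have "u z \<le> w z" using least z IN_subset_nodes by blast
    then show False using t(1) unfolding w_def by simp
  qed
  then show ?thesis using u unfolding disc_obstacle_sol_def supersolution_def by blast
qed

lemma solution_exists: "\<exists>u. solution f obs g u"
  using least_supersolution_exists least_supersolution_solves by blast

section \<open>Uniqueness\<close>

lemma solution_le_scaled_solution:
  assumes u: "solution f obs g u" and v: "solution f obs g v"
    and c: "0 \<le> c" and f: "\<forall>z\<in>IN. f z < c * f z" and above: "\<forall>y\<in>nodes T. v y \<le> c * v y + d"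
  shows "\<forall>y\<in>nodes T. u y \<le> c * v y + d"
proof (rule comparison[OF u])
  show "\<forall>z\<in>IN. f z < lap (\<lambda>y. c * v y + d) z \<and> obs z \<le> c * v z + d"
  proof
    fix z assume z: "z \<in> IN"
    have "c * f z \<le> c * lap v z" using solutionD(2)[OF v z] c by (rule mult_left_mono)
    then have "f z < lap (\<lambda>y. c * v y + d) z" using lap_affine[OF z c] f z by fastforce
    moreover have "obs z \<le> c * v z + d"
      using solutionD(3)[OF v z] above z IN_subset_nodes by fastforce
    ultimately show "f z < lap (\<lambda>y. c * v y + d) z \<and> obs z \<le> c * v z + d" ..
  qed
  show "\<forall>z\<in>BN. u z \<le> c * v z + d"
    using solutionD(5)[OF u] solutionD(5)[OF v] above BN_subset_nodes by fastforce
qed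

lemma solution_le_if_pos:
  assumes u: "solution f obs g u" and v: "solution f obs g v" and f: "\<forall>z\<in>IN. 0 < f z"
  shows "\<forall>y\<in>nodes T. u y \<le> v y"
proof
  fix y assume y: "y \<in> nodes T"
  define m where "m = Min (v ` nodes T)"
  have m: "\<forall>x\<in>nodes T. m \<le> v x" unfolding m_def using finite_nodes[OF mesh] by simp
  show "u y \<le> v y"
  proof (rule le_if_le_plus_vanishing)
    fix \<delta> :: real assume "0 < \<delta>"
    then have "\<forall>x\<in>nodes T. u x \<le> (1 + \<delta>) * v x + - \<delta> * m"
      using m f by (intro solution_le_scaled_solution[OF u v]) (auto simp: algebra_simps)
    then show "u y \<le> v y + \<delta> * (v y - m)" using y by (simp add: algebra_simps)
  qed
qed

lemma solution_le_if_neg: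
  assumes u: "solution f obs g u" and v: "solution f obs g v" and f: "\<forall>z\<in>IN. f z < 0"
  shows "\<forall>y\<in>nodes T. u y \<le> v y"
proof
  fix y assume y: "y \<in> nodes T"
  define M where "M = Max (v ` nodes T)"
  have M: "\<forall>x\<in>nodes T. v x \<le> M" unfolding M_def using finite_nodes[OF mesh] by simp
  show "u y \<le> v y"
  proof (rule le_if_le_plus_vanishing)
    fix \<delta> :: real assume "0 < \<delta>" "\<delta> < 1"
    then have "\<forall>x\<in>nodes T. u x \<le> (1 - \<delta>) * v x + \<delta> * M"
      using M f by (intro solution_le_scaled_solution[OF u v])
        (auto simp: algebra_simps mult_less_0_iff mult_left_mono)
    then show "u y \<le> v y + \<delta> * (M - v y)" using y by (simp add: algebra_simps)
  qed
qed

lemma touching_interp_const: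
  assumes x: "x \<in> IN" and le: "\<forall>y\<in>nodes T. u y \<le> w y" and touch: "u x = w x"
    and sub: "lap u x \<le> 0" and super: "0 \<le> lap w x"
    and top: "\<forall>y\<in>nodes T. u y = w y \<longrightarrow> u y \<le> u x"
    and p: "p \<in> stencil \<epsilon> S\<theta> x"
  shows "interp T u p = u x" and "interp T w p \<le> u x"
proof -
  let ?St = "stencil \<epsilon> S\<theta> x" and ?Iu = "interp T u" and ?Iw = "interp T w"
  have St: "?St \<subseteq> mesh_union T" using stencil_subset_mesh_union[OF x] .
  have St_fin: "finite ?St" "?St \<noteq> {}" using finite_stencil[OF finite_dirs] center_in_stencil by blast+
  have x_node: "x \<in> nodes T" using x IN_subset_nodes by blast
  define maxu where "maxu = Max (?Iu ` ?St)"
  define minu where "minu = Min (?Iu ` ?St)"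
  define maxw where "maxw = Max (?Iw ` ?St)"
  define minw where "minw = Min (?Iw ` ?St)"
  have Iu_le: "\<forall>p\<in>?St. ?Iu p \<le> ?Iw p" using interp_mono[OF mesh _ le] St by blast
  have "maxu \<le> maxw" "minu \<le> minw"
    unfolding maxu_def maxw_def minu_def minw_def
    using Max_image_mono[OF St_fin Iu_le] Min_image_mono[OF St_fin Iu_le] by auto
  moreover have "2 * u x - maxu - minu \<le> 0" "0 \<le> 2 * w x - maxw - minw"
    using sub super eps_pos unfolding disc_inf_lap_def maxu_def minu_def maxw_def minw_def
    by (simp_all add: divide_le_0_iff zero_le_divide_iff)
  ultimately have max_eq: "maxu = maxw" and sum_eq: "maxu + minu = 2 * u x" using touch by linarith+
  have bounds: "minu \<le> ?Iu q" "?Iu q \<le> maxu" "?Iw q \<le> maxw" if "q \<in> ?St" for q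
    using that St_fin unfolding maxu_def minu_def maxw_def by auto
  have "maxu \<in> ?Iu ` ?St" using Max_in St_fin unfolding maxu_def by blast
  then obtain p0 where p0: "p0 \<in> ?St" "?Iu p0 = maxu" by (metis imageE)
  have "?Iw p0 \<le> ?Iu p0" using bounds(3)[OF p0(1)] p0(2) max_eq by simp
  moreover have p0_mesh: "p0 \<in> mesh_union T" using St p0(1) by blast
  \<comment> \<open>so the maximum of the interpolant of u only sees nodes of the contact set\<close>
  ultimately have "\<forall>z\<in>nodes T. 0 < hat T z p0 \<longrightarrow> u z \<le> u x"
    using le_bound_on_hat_support_if_interp_touches[OF mesh _ le _ top] by blast
  then have "?Iu p0 \<le> u x" by (rule interp_le_if_le_on_hat_support[OF mesh p0_mesh])
  then have "maxu \<le> u x" using p0(2) by simp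
  moreover have "u x \<le> maxu" using bounds(2)[OF center_in_stencil] interp_node[OF mesh x_node] by simp
  ultimately have "maxu = u x" "minu = u x" using sum_eq by linarith+
  then show "?Iu p = u x" "?Iw p \<le> u x" using bounds[OF p] max_eq by linarith+
qed

lemma touching_contact_spreads:
  assumes x: "x \<in> IN" and le: "\<forall>y\<in>nodes T. u y \<le> w y" and touch: "u x = w x"
    and sub: "lap u x \<le> 0" and super: "0 \<le> lap w x"
    and top: "\<forall>y\<in>nodes T. u y = w y \<longrightarrow> u y \<le> u x"
    and z: "z \<in> ext_stencil T \<epsilon> S\<theta> x"
  shows "u z = w z \<and> u z = u x"
proof (cases "z = x")
  case False
  then obtain v where z_node: "z \<in> nodes T" and v: "v \<in> S\<theta>" and hat: "0 < hat T z (x + \<epsilon> *\<^sub>R v)"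
    using z unfolding ext_stencil_def by blast
  let ?p = "x + \<epsilon> *\<^sub>R v"
  have p: "?p \<in> stencil \<epsilon> S\<theta> x" "?p \<in> mesh_union T"
    using stencil_point_in_stencil[OF v] stencil_subset_mesh_union[OF x] by blast+
  note flat = touching_interp_const[OF x le touch sub super top p(1)]
  have "u z = w z" using eq_on_hat_support_if_interp_touches[OF mesh p(2) le _ z_node hat] flat by simp
  moreover have "u z = u x"
    using eq_on_hat_support_if_interp_ge[OF mesh p(2)
        le_bound_on_hat_support_if_interp_touches[OF mesh p(2) le _ top] _ z_node hat] flat by simp
  ultimately show ?thesis ..
qed (use touch in simp)

lemma solution_le_if_M1:
  assumes u: "solution f obs g u" and v: "solution f obs g v"
    and f: "\<forall>z\<in>IN. f z = 0" and M1: "cond_M1 \<Omega> T \<epsilon> S\<theta>"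
  shows "\<forall>y\<in>nodes T. u y \<le> v y"
proof (rule ccontr)
  assume "\<not> (\<forall>y\<in>nodes T. u y \<le> v y)"
  then obtain y0 where y0: "y0 \<in> nodes T" "v y0 < u y0" by force
  define M where "M = Max ((\<lambda>y. u y - v y) ` nodes T)"
  have fin: "finite ((\<lambda>y. u y - v y) ` nodes T)" using finite_nodes[OF mesh] by simp
  have le: "\<forall>y\<in>nodes T. u y \<le> v y + M" using Max_ge[OF fin] unfolding M_def by fastforce
  have "0 < M" using le y0 by fastforce
  define E where "E = {y\<in>nodes T. u y = v y + M}"
  have "E \<noteq> {}" using Max_in[OF fin] y0(1) unfolding E_def M_def by fastforce
  have "finite E" using finite_nodes[OF mesh] unfolding E_def by simp
  have E_IN: "E \<subseteq> IN"
    using BN_if_not_IN solutionD(5)[OF u] solutionD(5)[OF v] \<open>0 < M\<close> unfolding E_def by fastforce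
  define top where "top = Max (u ` E)"
  define Etop where "Etop = {y\<in>E. u y = top}"
  have "Etop \<noteq> {}" "Etop \<subseteq> IN"
    using Max_in[of "u ` E"] \<open>finite E\<close> \<open>E \<noteq> {}\<close> E_IN unfolding Etop_def top_def by fastforce+
  then obtain x z where x: "x \<in> Etop" and z: "z \<in> nodes T - Etop" "z \<in> ext_stencil T \<epsilon> S\<theta> x"
    using M1 unfolding cond_M1_def by blast
  have xIN: "x \<in> IN" and ux: "u x = v x + M" "u x = top" using x E_IN unfolding Etop_def E_def by auto
  have "lap u x = 0" using solutionD(3,4)[OF v xIN] solutionD(4)[OF u xIN] f xIN ux \<open>0 < M\<close> by simp
  moreover have "0 \<le> lap (\<lambda>y. 1 * v y + M) x"
    using lap_affine[OF xIN, of 1 v M] solutionD(2)[OF v xIN] f xIN by simp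
  moreover have "\<forall>y\<in>nodes T. u y = 1 * v y + M \<longrightarrow> u y \<le> u x"
    using Max_ge[of "u ` E"] \<open>finite E\<close> ux(2) unfolding top_def E_def by simp
  ultimately have "u z = 1 * v z + M \<and> u z = u x"
    using touching_contact_spreads[OF xIN _ _ _ _ _ z(2), of u "\<lambda>y. 1 * v y + M"] le ux by simp
  then have "z \<in> Etop" using z ux unfolding Etop_def E_def by simp
  then show False using z by blast
qed

lemma solution_unique:
  assumes u: "solution f obs g u" and v: "solution f obs g v"
    and sign: "(\<forall>z\<in>IN. 0 < f z) \<or> (\<forall>z\<in>IN. f z < 0) \<or> ((\<forall>z\<in>IN. f z = 0) \<and> cond_M1 \<Omega> T \<epsilon> S\<theta>)"
  shows "u = v"
proof -
  have "\<forall>y\<in>nodes T. u y \<le> v y" "\<forall>y\<in>nodes T. v y \<le> u y"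
    using sign solution_le_if_pos[OF u v] solution_le_if_pos[OF v u] solution_le_if_neg[OF u v]
      solution_le_if_neg[OF v u] solution_le_if_M1[OF u v] solution_le_if_M1[OF v u] by blast+
  then show ?thesis
    using P1_eq_if_eq_on_nodes[OF mesh solutionD(1)[OF u] solutionD(1)[OF v]] by (simp add: order_antisym)
qed

section \<open>The stability bound\<close>

lemma solution_le_on_nodes:
  assumes u: "solution f obs g u" and F: "\<forall>z\<in>IN. f z \<le> F" "0 \<le> F"
    and B: "\<forall>z\<in>IN. obs z \<le> B" "\<forall>z\<in>BN. g z \<le> B"
    and R: "\<forall>y\<in>nodes T. norm (y - x0) \<le> R" and y: "y \<in> nodes T"
  shows "u y \<le> B + F * R\<^sup>2"
proof (rule le_if_le_plus_vanishing)
  fix \<delta> :: real assume "0 < \<delta>"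
  define A where "A = F + \<delta>"
  define q where "q y = (B + A * R\<^sup>2) - A * (norm (y - x0))\<^sup>2" for y
  have "0 \<le> A" using F(2) \<open>0 < \<delta>\<close> unfolding A_def by simp
  have q_ge: "B \<le> q y" if "y \<in> nodes T" for y
  proof -
    have "(norm (y - x0))\<^sup>2 \<le> R\<^sup>2" using R that by (simp add: power_mono)
    then show ?thesis unfolding q_def using \<open>0 \<le> A\<close> by (simp add: mult_left_mono)
  qed
  have "\<forall>y\<in>nodes T. u y \<le> q y"
  proof (rule comparison[OF u])
    have "A \<le> lap q z" if "z \<in> IN" for z
      unfolding q_def using lap_paraboloid[OF that \<open>0 \<le> A\<close>] .
    then show "\<forall>z\<in>IN. f z < lap q z \<and> obs z \<le> q z"
      using F(1) B(1) q_ge IN_subset_nodes \<open>0 < \<delta>\<close> unfolding A_def by fastforce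
    show "\<forall>z\<in>BN. u z \<le> q z"
      using solutionD(5)[OF u] B(2) q_ge BN_subset_nodes by fastforce
  qed
  moreover have "q y \<le> B + A * R\<^sup>2" unfolding q_def using \<open>0 \<le> A\<close> by simp
  ultimately have "u y \<le> B + A * R\<^sup>2" using y by fastforce
  then show "u y \<le> B + F * R\<^sup>2 + \<delta> * R\<^sup>2" unfolding A_def by (simp add: algebra_simps)
qed

lemma solution_linf_bound:
  assumes u: "solution f obs g u"
    and bounded: "bounded (f ` mesh_domain T)" "bounded (obs ` mesh_domain T)"
    and R: "\<forall>y\<in>nodes T. norm (y - x0) \<le> R"
  shows "linf_norm (mesh_domain T) u
    \<le> R\<^sup>2 * linf_norm (mesh_domain T) f + linf_norm (mesh_domain T) obs + max_abs BN g"
proof -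
  let ?F = "linf_norm (mesh_domain T) f" and ?O = "linf_norm (mesh_domain T) obs"
    and ?G = "max_abs BN g"
  have nonneg: "0 \<le> ?F" "0 \<le> ?O" "0 \<le> ?G"
    using linf_norm_nonneg bounded max_abs_nonneg[OF finite_BN] by auto
  have f: "\<forall>z\<in>IN. f z \<le> ?F" and obs: "\<forall>z\<in>IN. \<bar>obs z\<bar> \<le> ?O"
    using abs_le_linf_norm bounded IN_subset_mesh_domain by (fastforce simp: abs_le_iff)+
  have g: "\<forall>z\<in>BN. \<bar>g z\<bar> \<le> ?G" using abs_le_max_abs[OF finite_BN] by blast
  have "\<bar>u y\<bar> \<le> R\<^sup>2 * ?F + ?O + ?G" if y: "y \<in> nodes T" for y
  proof -
    have "\<forall>z\<in>IN. obs z \<le> ?O + ?G" "\<forall>z\<in>BN. g z \<le> ?O + ?G"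
      using obs g nonneg by (fastforce simp: abs_le_iff)+
    then have "u y \<le> (?O + ?G) + ?F * R\<^sup>2"
      using solution_le_on_nodes[OF u f nonneg(1) _ _ R y] by blast
    moreover have "- (?O + ?G) \<le> u y"
    proof (cases "y \<in> IN")
      case True
      then show ?thesis using solutionD(3)[OF u] obs nonneg(3) by (fastforce simp: abs_le_iff)
    next
      case False
      then show ?thesis
        using BN_if_not_IN[OF y] solutionD(5)[OF u] g nonneg(2) by (fastforce simp: abs_le_iff)
    qed
    moreover have "0 \<le> ?F * R\<^sup>2" using nonneg(1) by simp
    ultimately show ?thesis by (simp add: abs_le_iff algebra_simps)
  qed
  then have "\<forall>x\<in>mesh_domain T. \<bar>u x\<bar> \<le> R\<^sup>2 * ?F + ?O + ?G"
    using P1_abs_le_if_abs_le_on_nodes[OF mesh solutionD(1)[OF u]] interior_subset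
    unfolding mesh_domain_def by blast
  moreover have "0 \<le> R\<^sup>2 * ?F + ?O + ?G" using nonneg by simp
  ultimately show ?thesis by (rule linf_norm_le)
qed

lemma sign_on_interior_nodes:
  fixes f :: "'a \<Rightarrow> real"
  assumes sign: "(\<exists>c<0. \<forall>x\<in>\<Omega>. f x \<le> c) \<or> (\<exists>c>0. \<forall>x\<in>\<Omega>. f x \<ge> c) \<or> (\<forall>x\<in>\<Omega>. f x = 0)"
    and M1: "(\<forall>x\<in>\<Omega>. f x = 0) \<longrightarrow> cond_M1 \<Omega> T \<epsilon> S\<theta>"
  shows "(\<forall>z\<in>IN. 0 < f z) \<or> (\<forall>z\<in>IN. f z < 0) \<or> ((\<forall>z\<in>IN. f z = 0) \<and> cond_M1 \<Omega> T \<epsilon> S\<theta>)"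
proof -
  have IN_subset: "IN \<subseteq> \<Omega>" unfolding interior_nodes_def inner_set_def by blast
  from sign show ?thesis
  proof (elim disjE exE conjE)
    fix c :: real assume "c < 0" "\<forall>x\<in>\<Omega>. f x \<le> c"
    then show ?thesis using IN_subset by fastforce
  next
    fix c :: real assume "0 < c" "\<forall>x\<in>\<Omega>. c \<le> f x"
    then show ?thesis using IN_subset by fastforce
  next
    assume "\<forall>x\<in>\<Omega>. f x = 0"
    then show ?thesis using IN_subset M1 by blast
  qed
qed

lemma well_posed:
  assumes "bounded \<Omega>" and "\<Omega> \<noteq> {}" and f: "bounded (f ` \<Omega>)"
    and obs: "continuous_on (closure \<Omega>) obs"
    and sign: "(\<exists>c<0. \<forall>x\<in>\<Omega>. f x \<le> c) \<or> (\<exists>c>0. \<forall>x\<in>\<Omega>. f x \<ge> c) \<or> (\<forall>x\<in>\<Omega>. f x = 0)"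
    and M1: "(\<forall>x\<in>\<Omega>. f x = 0) \<longrightarrow> cond_M1 \<Omega> T \<epsilon> S\<theta>"
  shows "(\<exists>!u. solution f obs g u) \<and>
    (\<forall>u. solution f obs g u \<longrightarrow>
      linf_norm (mesh_domain T) u \<le> ((diameter (closure \<Omega>))\<^sup>2 + 1) * linf_norm (mesh_domain T) f
        + linf_norm (mesh_domain T) obs + max_abs BN g)"
proof -
  have sign_IN: "(\<forall>z\<in>IN. 0 < f z) \<or> (\<forall>z\<in>IN. f z < 0) \<or> ((\<forall>z\<in>IN. f z = 0) \<and> cond_M1 \<Omega> T \<epsilon> S\<theta>)"
    using sign_on_interior_nodes[OF sign M1] .
  have "bounded (obs ` closure \<Omega>)"
    using compact_continuous_image[OF obs] assms(1) by (simp add: compact_imp_bounded)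
  then have bounded: "bounded (f ` mesh_domain T)" "bounded (obs ` mesh_domain T)"
    using f mesh_domain_subset closure_subset by (meson bounded_subset image_mono order_trans)+
  obtain x0 where "x0 \<in> closure \<Omega>" using assms(2) closure_subset by blast
  then have R: "\<forall>y\<in>nodes T. norm (y - x0) \<le> diameter (closure \<Omega>)"
    using nodes_subset_closure[OF mesh mesh_domain_subset] diameter_bounded_bound[of "closure \<Omega>"]
      bounded_closure[OF assms(1)] by (fastforce simp: dist_norm)
  show ?thesis
  proof (intro conjI allI impI ex_ex1I)
    show "\<exists>u. solution f obs g u" by (rule solution_exists)
    show "u = v" if "solution f obs g u" and "solution f obs g v" for u v
      using solution_unique[OF that sign_IN] .
    fix u assume u: "solution f obs g u"
    have "(diameter (closure \<Omega>))\<^sup>2 * linf_norm (mesh_domain T) f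
        \<le> ((diameter (closure \<Omega>))\<^sup>2 + 1) * linf_norm (mesh_domain T) f"
      using linf_norm_nonneg[OF bounded(1)] by (simp add: algebra_simps)
    then show "linf_norm (mesh_domain T) u \<le> ((diameter (closure \<Omega>))\<^sup>2 + 1) * linf_norm (mesh_domain T) f
        + linf_norm (mesh_domain T) obs + max_abs BN g"
      using solution_linf_bound[OF u bounded R] by linarith
  qed
qed

end

theorem lemma5p6:
  fixes \<Omega> :: "'a::euclidean_space set"
  assumes "open \<Omega>" and "connected \<Omega>" and "bounded \<Omega>" and "\<Omega> \<noteq> {}"
    and "continuous_boundary \<Omega>"
  shows "\<exists>C>0. \<forall>(f::'a \<Rightarrow> real) (g::'a \<Rightarrow> real) (gt::real \<Rightarrow> 'a \<Rightarrow> real) (obs::'a \<Rightarrow> real).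
     \<comment> \<open>(RHS.1)\<close>
     (continuous_on \<Omega> f \<and> bounded (f ` \<Omega>)) \<longrightarrow>
     \<comment> \<open>(RHS.2)\<close>
     ((\<exists>c<0. \<forall>x\<in>\<Omega>. f x \<le> c) \<or> (\<exists>c>0. \<forall>x\<in>\<Omega>. f x \<ge> c) \<or> (\<forall>x\<in>\<Omega>. f x = 0)) \<longrightarrow>
     \<comment> \<open>(BC.1)\<close>
     continuous_on (frontier \<Omega>) g \<longrightarrow>
     \<comment> \<open>(BC.2)\<close>
     (\<forall>\<epsilon>>0. continuous_on (closure \<Omega>) (gt \<epsilon>)) \<longrightarrow>
     (\<forall>\<alpha>. 0 \<le> \<alpha> \<and> \<alpha> \<le> 1 \<and> holder_on (frontier \<Omega>) \<alpha> g \<longrightarrow>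
        (\<exists>Cg. \<forall>\<epsilon>>0. holder_on (closure \<Omega>) \<alpha> (gt \<epsilon>) \<and>
                     (\<forall>x\<in>frontier \<Omega>. \<bar>g x - gt \<epsilon> x\<bar> \<le> Cg * \<epsilon> powr \<alpha>))) \<longrightarrow>
     \<comment> \<open>(OBS.1)\<close>
     (continuous_on (closure \<Omega>) obs \<and> (\<forall>x\<in>frontier \<Omega>. obs x < g x)) \<longrightarrow>
     (\<forall>\<T> h \<epsilon> \<theta> S\<theta>.
        is_mesh \<T> \<and> h = mesh_size \<T> \<and>
        inner_set \<Omega> h \<subseteq> mesh_domain \<T> \<and> mesh_domain \<T> \<subseteq> \<Omega> \<and>
        h \<le> \<epsilon> \<and> \<epsilon> \<le> diameter \<Omega> \<and> 0 < \<theta> \<and> \<theta> \<le> 1 \<and> stencil_dirs S\<theta> \<theta> \<and>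
        \<comment> \<open>(M.1) in case (RHS.2b)\<close>
        ((\<forall>x\<in>\<Omega>. f x = 0) \<longrightarrow> cond_M1 \<Omega> \<T> \<epsilon> S\<theta>) \<longrightarrow>
        (\<exists>!u. disc_obstacle_sol \<Omega> \<T> \<epsilon> S\<theta> f obs (gt \<epsilon>) u) \<and>
        (\<forall>u. disc_obstacle_sol \<Omega> \<T> \<epsilon> S\<theta> f obs (gt \<epsilon>) u \<longrightarrow>
           linf_norm (mesh_domain \<T>) u
             \<le> C * linf_norm (mesh_domain \<T>) f + linf_norm (mesh_domain \<T>) obs
               + max_abs (boundary_nodes \<Omega> \<T> \<epsilon>) (gt \<epsilon>)))"
proof (rule exI[of _ "(diameter (closure \<Omega>))\<^sup>2 + 1"], rule conjI, simp add: add_nonneg_pos,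
    intro allI impI)
  fix f g :: "'a \<Rightarrow> real" and gt :: "real \<Rightarrow> 'a \<Rightarrow> real" and obs :: "'a \<Rightarrow> real"
    and T h \<epsilon> \<theta> and S\<theta> :: "'a set"
  assume f: "continuous_on \<Omega> f \<and> bounded (f ` \<Omega>)"
    and sign: "(\<exists>c<0. \<forall>x\<in>\<Omega>. f x \<le> c) \<or> (\<exists>c>0. \<forall>x\<in>\<Omega>. f x \<ge> c) \<or> (\<forall>x\<in>\<Omega>. f x = 0)"
    and obs: "continuous_on (closure \<Omega>) obs \<and> (\<forall>x\<in>frontier \<Omega>. obs x < g x)"
    and scheme: "is_mesh T \<and> h = mesh_size T \<and>
        inner_set \<Omega> h \<subseteq> mesh_domain T \<and> mesh_domain T \<subseteq> \<Omega> \<and>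
        h \<le> \<epsilon> \<and> \<epsilon> \<le> diameter \<Omega> \<and> 0 < \<theta> \<and> \<theta> \<le> 1 \<and> stencil_dirs S\<theta> \<theta> \<and>
        ((\<forall>x\<in>\<Omega>. f x = 0) \<longrightarrow> cond_M1 \<Omega> T \<epsilon> S\<theta>)"
  interpret obstacle_scheme \<Omega> T \<epsilon> S\<theta>
    using scheme stencil_dirs_nonempty by unfold_locales (auto simp: stencil_dirs_def)
  show "(\<exists>!u. disc_obstacle_sol \<Omega> T \<epsilon> S\<theta> f obs (gt \<epsilon>) u) \<and>
      (\<forall>u. disc_obstacle_sol \<Omega> T \<epsilon> S\<theta> f obs (gt \<epsilon>) u \<longrightarrow>
         linf_norm (mesh_domain T) u
           \<le> ((diameter (closure \<Omega>))\<^sup>2 + 1) * linf_norm (mesh_domain T) f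
             + linf_norm (mesh_domain T) obs + max_abs (boundary_nodes \<Omega> T \<epsilon>) (gt \<epsilon>))"
    using well_posed assms(3,4) f obs sign scheme by blast
qed

end
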